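(* For any $\delta>0$ there is $L=L(\delta)$ such that $R(g,n)>\big(\tfrac{2}{\sqrt\pi}-\delta\big)\sqrt{gn}$ for all positive integers $g,n$ with $\frac{g}{\log n}>L$ and $\frac ng>L$.
   Context: A set $S$ of integers is a $B^*[g]$ set if for every integer $m$ there are at most $g$ ordered pairs $(s_1,s_2)\in S\times S$ with $s_1+s_2=m$. $R(g,n)$ is the maximum cardinality of a $B^*[g]$ set contained in $\{1,2,\dots,n\}$. *)

theory Defs
  imports Complex_Main
begin

definition rep_count :: "int set \<Rightarrow> int \<Rightarrow> nat" where
  "rep_count S m = card {(s1, s2). s1 \<in> S \<and> s2 \<in> S \<and> s1 + s2 = m}"

definition Bstar :: "nat \<Rightarrow> int set \<Rightarrow> bool" where
  "Bstar g S \<longleftrightarrow> (\<forall>m. rep_count S m \<le> g)"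

definition R :: "nat \<Rightarrow> nat \<Rightarrow> nat" where
  "R g n = Max {card S | S. S \<subseteq> {1..int n} \<and> Bstar g S}"

end

theory Submission
  imports Defs
begin

text \<open>Let \<open>S\<close> be the random subset of \<open>{1..n}\<close> that contains each \<open>x\<close> independently with
  probability \<open>\<beta> / sqrt (x + g)\<close>, where \<open>\<beta> = (1 - \<epsilon>) sqrt (g / pi)\<close>. For every \<open>m\<close> the
  expected number of pairs \<open>s < m - s\<close> in \<open>S\<close> is at most \<open>\<beta>^2\<close> times
  \<open>\<Sum>s. 1 / sqrt (s (m - s))\<close>, and by convexity this sum is at most the integral of
  \<open>1 / sqrt (x (m - x))\<close> over \<open>[0, m/2]\<close>, which is \<open>pi / 2\<close>; so the mean is at most
  \<open>(1 - \<epsilon>)^2 g / 2\<close>. A factorial moment bound turns this into a probability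
  \<open>O(exp (- \<epsilon>^2 g / 2))\<close> that \<open>m\<close> has more than \<open>g\<close> representations, which is \<open>O(n^-3)\<close>
  when \<open>g / log n\<close> is large. Discarding the samples that are not \<open>B*[g]\<close> sets therefore costs
  only \<open>O(1/n)\<close> in expectation, while \<open>E |S| \<ge> 2 \<beta> (sqrt n - sqrt (g + 1))\<close>, which is close
  to \<open>(1 - \<epsilon>) (2 / sqrt pi) sqrt (g n)\<close> when \<open>n / g\<close> is large.\<close>

section \<open>Sums of inverse square roots\<close>

lemma inverse_sqrt_mean_le:
  fixes A B u :: real
  assumes "0 < A" "0 < B" "A + B \<le> 2 * u"
  shows "2 / sqrt u \<le> 1 / sqrt A + 1 / sqrt B"
proof -
  define a b where "a = sqrt A" and "b = sqrt B"
  have ab: "0 < a" "0 < b" "a^2 = A" "b^2 = B"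
    using assms(1,2) by (auto simp: a_def b_def)
  have "(a + b)^2 = 2 * (A + B) - (a - b)^2"
    using ab by (simp add: power2_eq_square algebra_simps)
  also have "\<dots> \<le> 4 * u"
    using assms(3) by (smt (verit) zero_le_power2)
  also have "\<dots> = (2 * sqrt u)^2"
    using assms by (simp add: power_mult_distrib)
  finally have "a + b \<le> 2 * sqrt u"
    by (rule power2_le_imp_le) (use assms in simp)
  then have "2 / sqrt u \<le> 4 / (a + b)"
    using divide_left_mono[of "a + b" "2 * sqrt u" 4] ab assms by (simp add: mult_pos_pos)
  also have "4 / (a + b) \<le> 1 / a + 1 / b"
    using ab zero_le_power2[of "a - b"] by (simp add: field_simps power2_eq_square)
  finally show ?thesis unfolding a_def b_def .
qed

lemma has_real_derivative_arcsin_chord: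
  fixes m x :: real
  assumes "0 < x" "x < m"
  shows "((\<lambda>x. arcsin ((2 * x - m) / m)) has_real_derivative 1 / sqrt (x * (m - x))) (at x)"
proof -
  have m: "0 < m" using assms by simp
  have "-1 < (2 * x - m) / m" "(2 * x - m) / m < 1" using assms by (auto simp: field_simps)
  then have chain: "((\<lambda>x. arcsin ((2 * x - m) / m)) has_real_derivative
        inverse (sqrt (1 - ((2 * x - m) / m)^2)) * (2 / m)) (at x)"
    by (intro DERIV_chain2[OF DERIV_arcsin]) (use m in \<open>auto intro!: derivative_eq_intros\<close>)
  have "1 - ((2 * x - m) / m)^2 = (2 / m)^2 * (x * (m - x))"
    using m by (simp add: field_simps power2_eq_square)
  then have "sqrt (1 - ((2 * x - m) / m)^2) = (2 / m) * sqrt (x * (m - x))"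
    using m by (simp add: real_sqrt_mult)
  then have "inverse (sqrt (1 - ((2 * x - m) / m)^2)) * (2 / m) = 1 / sqrt (x * (m - x))"
    using m assms by (simp add: field_simps)
  with chain show ?thesis by simp
qed

text \<open>Hermite-Hadamard for the convex function \<open>1 / sqrt (x * (m - x))\<close>: its value at \<open>s\<close> is at
  most its integral over \<open>[s - 1/2, s + 1/2]\<close>, and \<open>arcsin ((2 * x - m) / m)\<close> is a primitive.\<close>
lemma inverse_sqrt_le_arcsin_diff:
  fixes m s :: real
  assumes "1/2 < s" "s + 1/2 < m"
  shows "1 / sqrt (s * (m - s)) \<le> arcsin ((2 * s + 1 - m) / m) - arcsin ((2 * s - 1 - m) / m)"
proof -
  define f where "f x = 1 / sqrt (x * (m - x))" for x
  define F where "F x = arcsin ((2 * x - m) / m)" for x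
  define G where "G h = F (s + h) - F (s - h) - 2 * h * f s" for h
  have G': "(G has_real_derivative f (s + h) + f (s - h) - 2 * f s) (at h)" if "0 \<le> h" "h \<le> 1/2" for h
  proof -
    have F': "(F has_real_derivative f x) (at x)" if "0 < x" "x < m" for x
      unfolding F_def f_def using that by (rule has_real_derivative_arcsin_chord)
    have "((\<lambda>h. F (s + h)) has_real_derivative f (s + h) * 1) (at h)"
      by (rule DERIV_chain2[OF F']) (use that assms in \<open>auto intro!: derivative_eq_intros\<close>)
    moreover have "((\<lambda>h. F (s - h)) has_real_derivative f (s - h) * (-1)) (at h)"
      by (rule DERIV_chain2[OF F']) (use that assms in \<open>auto intro!: derivative_eq_intros\<close>)
    ultimately show ?thesis
      unfolding G_def by (auto intro!: derivative_eq_intros)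
  qed
  have convex: "2 * f s \<le> f (s + h) + f (s - h)" if "0 < h" "h < 1/2" for h
  proof -
    have "2 / sqrt (s * (m - s)) \<le> f (s + h) + f (s - h)"
      unfolding f_def using that assms
      by (intro inverse_sqrt_mean_le mult_pos_pos) (auto simp: algebra_simps)
    then show ?thesis by (simp add: f_def)
  qed
  have "G 0 \<le> G (1/2)"
  proof (rule DERIV_nonneg_imp_increasing_open[of 0 "1/2" G])
    show "\<exists>y. (G has_real_derivative y) (at h) \<and> 0 \<le> y" if "0 < h" "h < 1/2" for h
      using G'[of h] convex[of h] that by auto
    show "continuous_on {0..1/2} G"
      using G' by (intro continuous_at_imp_continuous_on ballI) (auto intro: DERIV_isCont)
  qed simp
  then show ?thesis
    by (simp add: G_def F_def f_def algebra_simps)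
qed

lemma sum_inverse_sqrt_le_pi_half:
  fixes m :: real and j :: nat
  assumes "2 * real j + 1 \<le> m"
  shows "(\<Sum>s = 1..j. 1 / sqrt (real s * (m - real s))) \<le> pi / 2"
proof -
  define F where "F x = arcsin ((2 * x - m) / m)" for x
  have m: "1 \<le> m" using assms by simp
  have "(\<Sum>s = 1..j. 1 / sqrt (real s * (m - real s)))
      \<le> (\<Sum>s = 1..j. F (real (Suc s) - 1/2) - F (real s - 1/2))"
    by (intro sum_mono order_trans[OF inverse_sqrt_le_arcsin_diff])
      (use assms in \<open>auto simp: F_def algebra_simps\<close>)
  also have "\<dots> = F (real j + 1/2) - F (1/2)"
    by (subst sum_Suc_diff[where f = "\<lambda>s. F (real s - 1/2)"]) (auto simp: add.commute)
  finally have "(\<Sum>s = 1..j. 1 / sqrt (real s * (m - real s))) \<le> F (real j + 1/2) - F (1/2)" .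
  moreover have "F (real j + 1/2) \<le> arcsin 0"
    unfolding F_def using assms m by (intro arcsin_le_arcsin) (auto simp: field_simps)
  moreover have "- (pi / 2) \<le> F (1/2)"
    unfolding F_def using m by (intro arcsin_lbound) (auto simp: field_simps)
  ultimately show ?thesis by simp
qed

lemma sqrt_add_one_diff_le:
  fixes y :: real
  assumes "0 < y"
  shows "2 * (sqrt (y + 1) - sqrt y) \<le> 1 / sqrt y"
proof -
  have "(sqrt (y + 1) - sqrt y) * (sqrt (y + 1) + sqrt y) = 1"
    using assms by (simp add: algebra_simps)
  moreover have pos: "0 < sqrt (y + 1) + sqrt y"
    using assms by (simp add: add_pos_nonneg)
  ultimately have "sqrt (y + 1) - sqrt y = 1 / (sqrt (y + 1) + sqrt y)"
    by (simp add: eq_divide_eq)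
  also have "\<dots> \<le> 1 / (2 * sqrt y)"
    using assms pos by (intro divide_left_mono) (auto intro: mult_pos_pos)
  finally show ?thesis
    using assms by (simp add: field_simps)
qed

lemma sum_inverse_sqrt_ge:
  fixes c :: real
  assumes "0 \<le> c"
  shows "2 * (sqrt (real n + c + 1) - sqrt (c + 1)) \<le> (\<Sum>x\<in>{1..int n}. 1 / sqrt (of_int x + c))"
proof (induction n)
  case (Suc n)
  have "{1..int (Suc n)} = insert (int n + 1) {1..int n}" by auto
  then have "(\<Sum>x\<in>{1..int (Suc n)}. 1 / sqrt (of_int x + c))
      = 1 / sqrt (real n + 1 + c) + (\<Sum>x\<in>{1..int n}. 1 / sqrt (of_int x + c))"
    by simp
  moreover have "2 * (sqrt (real n + 1 + c + 1) - sqrt (real n + 1 + c)) \<le> 1 / sqrt (real n + 1 + c)"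
    using assms by (intro sqrt_add_one_diff_le) simp
  ultimately show ?case using Suc.IH by (simp add: algebra_simps)
qed simp

section \<open>Subsets and representations\<close>

lemma power_add_ge_leading_terms:
  fixes x y :: real
  assumes "0 \<le> x" "0 \<le> y"
  shows "x ^ Suc k + real (Suc k) * y * x ^ k \<le> (x + y) ^ Suc k"
proof (induction k)
  case (Suc k)
  have "x ^ Suc (Suc k) + real (Suc (Suc k)) * y * x ^ Suc k
      \<le> (x ^ Suc k + real (Suc k) * y * x ^ k) * (x + y)"
    using assms by (simp add: algebra_simps)
  also have "\<dots> \<le> (x + y) ^ Suc k * (x + y)"
    using Suc.IH assms by (intro mult_right_mono) auto
  finally show ?case by (simp add: mult.commute)
qed simp

lemma k_subsets_insert:
  assumes "finite P" "a \<notin> P"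
  shows "{T. T \<subseteq> insert a P \<and> card T = Suc k}
       = {T. T \<subseteq> P \<and> card T = Suc k} \<union> insert a ` {T. T \<subseteq> P \<and> card T = k}"
proof (intro equalityI subsetI)
  fix T assume T: "T \<in> {T. T \<subseteq> insert a P \<and> card T = Suc k}"
  then have "finite T" using assms finite_subset by auto
  then show "T \<in> {T. T \<subseteq> P \<and> card T = Suc k} \<union> insert a ` {T. T \<subseteq> P \<and> card T = k}"
    using T by (cases "a \<in> T") (auto intro!: image_eqI[where x = "T - {a}"])
next
  fix T assume "T \<in> {T. T \<subseteq> P \<and> card T = Suc k} \<union> insert a ` {T. T \<subseteq> P \<and> card T = k}"
  then show "T \<in> {T. T \<subseteq> insert a P \<and> card T = Suc k}"
    using assms by (auto simp: card_insert_if finite_subset[of _ P])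
qed

lemma fact_mult_sum_prod_k_subsets_le:
  fixes q :: "'a \<Rightarrow> real"
  assumes "finite P" "\<forall>x\<in>P. 0 \<le> q x"
  shows "fact k * (\<Sum>T | T \<subseteq> P \<and> card T = k. \<Prod>x\<in>T. q x) \<le> (\<Sum>x\<in>P. q x) ^ k"
  using assms
proof (induction P arbitrary: k rule: finite_induct)
  case empty
  have k_subsets: "{T. T \<subseteq> {} \<and> card T = k} = (if k = 0 then {{}} else {})" by auto
  show ?case by (simp only: k_subsets) simp
next
  case (insert a P)
  have qP: "\<forall>x\<in>P. 0 \<le> q x" and qa: "0 \<le> q a" using insert.prems by auto
  show ?case
  proof (cases k)
    case 0
    have "{T. T \<subseteq> insert a P \<and> card T = 0} = {{}}"
      using insert.hyps by (auto dest: finite_subset)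
    then show ?thesis using 0 by simp
  next
    case (Suc j)
    define e where "e i = (\<Sum>T | T \<subseteq> P \<and> card T = i. \<Prod>x\<in>T. q x)" for i
    have IH: "fact i * e i \<le> (\<Sum>x\<in>P. q x) ^ i" for i
      unfolding e_def by (rule insert.IH[OF qP])
    have "(\<Sum>T\<in>insert a ` {T. T \<subseteq> P \<and> card T = j}. \<Prod>x\<in>T. q x) = q a * e j"
      unfolding e_def sum_distrib_left using insert.hyps
      by (subst sum.reindex) (auto simp: inj_on_def intro!: sum.cong dest: finite_subset
          intro: prod.insert[THEN trans])
    then have "(\<Sum>T | T \<subseteq> insert a P \<and> card T = k. \<Prod>x\<in>T. q x) = e (Suc j) + q a * e j"
      unfolding Suc k_subsets_insert[OF insert.hyps] e_def
      using insert.hyps by (subst sum.union_disjoint) auto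
    then have "fact k * (\<Sum>T | T \<subseteq> insert a P \<and> card T = k. \<Prod>x\<in>T. q x)
        = fact (Suc j) * e (Suc j) + real (Suc j) * q a * (fact j * e j)"
      unfolding Suc by (simp add: algebra_simps)
    also have "\<dots> \<le> (\<Sum>x\<in>P. q x) ^ Suc j + real (Suc j) * q a * (\<Sum>x\<in>P. q x) ^ j"
      using qa by (intro add_mono mult_left_mono IH) simp
    also have "\<dots> \<le> (\<Sum>x\<in>insert a P. q x) ^ k"
      using power_add_ge_leading_terms[of "\<Sum>x\<in>P. q x" "q a" j] qP qa insert.hyps Suc
      by (simp add: sum_nonneg add.commute)
    finally show ?thesis .
  qed
qed

lemma power_le_fact_mult_choose:
  assumes "k \<le> N"
  shows "(N - k + 1) ^ k \<le> fact k * (N choose k)"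
proof -
  have "(N - k + 1) ^ k = (\<Prod>i\<in>{N - k + 1..N}. N - k + 1)"
    using assms by simp
  also have "\<dots> \<le> \<Prod>{N - k + 1..N}"
    by (rule prod_mono) simp
  also have "\<dots> = fact N div fact (N - k)"
    by (rule fact_div_fact[symmetric]) simp
  also have "fact N = fact k * (N choose k) * fact (N - k)"
    using binomial_fact_lemma[OF assms] by (simp add: algebra_simps)
  finally show ?thesis by simp
qed

definition lower_summands :: "int set \<Rightarrow> int \<Rightarrow> int set" where
  "lower_summands S m = {s \<in> S. 2 * s < m \<and> m - s \<in> S}"

lemma rep_count_le_lower_summands:
  assumes "finite S"
  shows "rep_count S m \<le> 2 * card (lower_summands S m) + 1"
proof -
  define A where "A = lower_summands S m"
  have "finite A" using assms by (simp add: A_def lower_summands_def)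
  have "{(s1, s2). s1 \<in> S \<and> s2 \<in> S \<and> s1 + s2 = m}
      \<subseteq> (\<lambda>s. (s, m - s)) ` A \<union> (\<lambda>s. (m - s, s)) ` A \<union> {(m div 2, m div 2)}"
  proof (intro subsetI, elim CollectE case_prodE)
    fix z s1 s2 assume "z = (s1, s2)" "s1 \<in> S \<and> s2 \<in> S \<and> s1 + s2 = m"
    then consider "2 * s1 < m" | "2 * s2 < m" | "s1 = m div 2 \<and> s2 = m div 2"
      by fastforce
    then show "z \<in> (\<lambda>s. (s, m - s)) ` A \<union> (\<lambda>s. (m - s, s)) ` A \<union> {(m div 2, m div 2)}"
      by cases (use \<open>z = (s1, s2)\<close> \<open>s1 \<in> S \<and> s2 \<in> S \<and> s1 + s2 = m\<close> in
          \<open>auto simp: A_def lower_summands_def image_iff\<close>)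
  qed
  then have "rep_count S m \<le> card ((\<lambda>s. (s, m - s)) ` A \<union> (\<lambda>s. (m - s, s)) ` A \<union> {(m div 2, m div 2)})"
    unfolding rep_count_def using \<open>finite A\<close> by (intro card_mono) auto
  also have "\<dots> \<le> card ((\<lambda>s. (s, m - s)) ` A) + card ((\<lambda>s. (m - s, s)) ` A) + 1"
    using card_Un_le[of "(\<lambda>s. (s, m - s)) ` A" "(\<lambda>s. (m - s, s)) ` A"]
      card_Un_le[of "(\<lambda>s. (s, m - s)) ` A \<union> (\<lambda>s. (m - s, s)) ` A" "{(m div 2, m div 2)}"]
    by simp
  also have "\<dots> \<le> 2 * card A + 1"
    unfolding mult_2 by (intro add_mono card_image_le[OF \<open>finite A\<close>] order_refl)
  finally show ?thesis by (simp add: A_def)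
qed

lemma lower_summands_mono: "S \<subseteq> V \<Longrightarrow> lower_summands S m \<subseteq> lower_summands V m"
  unfolding lower_summands_def by auto

lemma subset_lower_summands_iff:
  assumes "T \<subseteq> lower_summands V m"
  shows "T \<subseteq> lower_summands S m \<longleftrightarrow> T \<union> (\<lambda>s. m - s) ` T \<subseteq> S"
  using assms unfolding lower_summands_def by auto

lemma prod_lower_summands_pairs:
  assumes "T \<subseteq> lower_summands V m" "finite T"
  shows "(\<Prod>x\<in>T \<union> (\<lambda>s. m - s) ` T. p x) = (\<Prod>s\<in>T. p s * p (m - s))"
proof -
  have "s \<noteq> m - t" if "s \<in> T" "t \<in> T" for s t
  proof -
    have "2 * s < m" "2 * t < m" using that assms(1) unfolding lower_summands_def by auto
    then show ?thesis by linarith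
  qed
  then have "T \<inter> (\<lambda>s. m - s) ` T = {}" by auto
  moreover have "inj_on (\<lambda>s. m - s) T" by (rule inj_onI) simp
  ultimately show ?thesis
    using assms(2) by (simp add: prod.union_disjoint prod.reindex prod.distrib)
qed

lemma card_lower_summands_power_le:
  assumes "finite S" "S \<subseteq> V" "k \<le> a" "a \<le> card (lower_summands S m)"
  shows "(a - k + 1) ^ k
    \<le> fact k * card {T. T \<subseteq> lower_summands V m \<and> card T = k \<and> T \<union> (\<lambda>s. m - s) ` T \<subseteq> S}"
proof -
  define A where "A = lower_summands S m"
  have "finite A" using assms(1) by (simp add: A_def lower_summands_def)
  have "T \<subseteq> A \<longleftrightarrow> T \<subseteq> lower_summands V m \<and> T \<union> (\<lambda>s. m - s) ` T \<subseteq> S" for T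
    using lower_summands_mono[OF assms(2), of m] subset_lower_summands_iff[of T V m S]
    unfolding A_def by (meson order_trans)
  then have k_subsets: "{T. T \<subseteq> A \<and> card T = k}
      = {T. T \<subseteq> lower_summands V m \<and> card T = k \<and> T \<union> (\<lambda>s. m - s) ` T \<subseteq> S}"
    by auto
  have "(a - k + 1) ^ k \<le> (card A - k + 1) ^ k"
    using assms(4) by (intro power_mono) (auto simp: A_def)
  also have "\<dots> \<le> fact k * (card A choose k)"
    using assms(3,4) by (intro power_le_fact_mult_choose) (simp add: A_def)
  also have "card A choose k = card {T. T \<subseteq> A \<and> card T = k}"
    by (rule n_subsets[OF \<open>finite A\<close>, symmetric])
  finally show ?thesis unfolding k_subsets .
qed

section \<open>Random subsets\<close>

text \<open>The random subset of \<open>V\<close> containing each \<open>x\<close> independently with probability \<open>p x\<close> is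
  modelled by elementary finite sums over \<open>Pow V\<close> rather than by a measure.\<close>

definition bernoulli_set_weight :: "'a set \<Rightarrow> ('a \<Rightarrow> real) \<Rightarrow> 'a set \<Rightarrow> real" where
  "bernoulli_set_weight V p S = (\<Prod>x\<in>S. p x) * (\<Prod>x\<in>V - S. 1 - p x)"

definition bernoulli_set_prob :: "'a set \<Rightarrow> ('a \<Rightarrow> real) \<Rightarrow> ('a set \<Rightarrow> bool) \<Rightarrow> real" where
  "bernoulli_set_prob V p E = (\<Sum>S\<in>Pow V. if E S then bernoulli_set_weight V p S else 0)"

lemma bernoulli_set_weight_nonneg:
  assumes "\<forall>x\<in>V. 0 \<le> p x \<and> p x \<le> 1" "S \<subseteq> V"
  shows "0 \<le> bernoulli_set_weight V p S"
  unfolding bernoulli_set_weight_def using assms by (intro mult_nonneg_nonneg prod_nonneg) auto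

lemma bernoulli_set_prob_supset:
  assumes "finite V" "U \<subseteq> V"
  shows "bernoulli_set_prob V p (\<lambda>S. U \<subseteq> S) = (\<Prod>x\<in>U. p x)"
proof -
  define q where "q x = (if x \<in> U then 0 else 1 - p x)" for x
  have "(\<Prod>x\<in>U. p x) = (\<Prod>x\<in>V. if x \<in> U then p x else 1)"
    using assms by (simp add: prod.inter_restrict[symmetric] Int_absorb1)
  also have "\<dots> = (\<Prod>x\<in>V. p x + q x)"
    by (intro prod.cong) (auto simp: q_def)
  also have "\<dots> = (\<Sum>S\<in>Pow V. (\<Prod>x\<in>S. p x) * (\<Prod>x\<in>V - S. q x))"
    by (rule prod_add[OF assms(1)])
  also have "\<dots> = bernoulli_set_prob V p (\<lambda>S. U \<subseteq> S)"
    unfolding bernoulli_set_prob_def bernoulli_set_weight_def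
  proof (intro sum.cong refl)
    fix S assume "S \<in> Pow V"
    show "(\<Prod>x\<in>S. p x) * (\<Prod>x\<in>V - S. q x)
        = (if U \<subseteq> S then (\<Prod>x\<in>S. p x) * (\<Prod>x\<in>V - S. 1 - p x) else 0)"
    proof (cases "U \<subseteq> S")
      case True
      then have "(\<Prod>x\<in>V - S. q x) = (\<Prod>x\<in>V - S. 1 - p x)"
        by (intro prod.cong) (auto simp: q_def)
      then show ?thesis using True by simp
    next
      case False
      then have "(\<Prod>x\<in>V - S. q x) = 0"
        using assms by (subst prod_zero_iff) (auto simp: q_def)
      then show ?thesis using False by simp
    qed
  qed
  finally show ?thesis by (rule sym)
qed

lemma bernoulli_set_weight_sum:
  assumes "finite V"
  shows "(\<Sum>S\<in>Pow V. bernoulli_set_weight V p S) = 1"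
  using bernoulli_set_prob_supset[OF assms, of "{}" p] by (simp add: bernoulli_set_prob_def)

lemma bernoulli_set_expected_card:
  assumes "finite V"
  shows "(\<Sum>S\<in>Pow V. bernoulli_set_weight V p S * card S) = (\<Sum>x\<in>V. p x)"
proof -
  have "(\<Sum>S\<in>Pow V. bernoulli_set_weight V p S * card S)
      = (\<Sum>S\<in>Pow V. \<Sum>x\<in>V. if {x} \<subseteq> S then bernoulli_set_weight V p S else 0)"
  proof (intro sum.cong refl)
    fix S assume "S \<in> Pow V"
    then have "real (card S) = (\<Sum>x\<in>V. if x \<in> S then 1 else 0)"
      using assms by (simp add: sum.inter_restrict[symmetric] Int_absorb1)
    then show "bernoulli_set_weight V p S * card S
        = (\<Sum>x\<in>V. if {x} \<subseteq> S then bernoulli_set_weight V p S else 0)"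
      by (auto simp: sum_distrib_left intro!: sum.cong)
  qed
  also have "\<dots> = (\<Sum>x\<in>V. bernoulli_set_prob V p (\<lambda>S. {x} \<subseteq> S))"
    unfolding bernoulli_set_prob_def by (rule sum.swap)
  also have "\<dots> = (\<Sum>x\<in>V. p x)"
    using assms bernoulli_set_prob_supset[of V "{x}" p for x] by (intro sum.cong refl) simp
  finally show ?thesis .
qed

lemma bernoulli_set_prob_union_bound:
  assumes "finite M" "\<forall>x\<in>V. 0 \<le> p x \<and> p x \<le> 1"
    and "\<And>S. S \<subseteq> V \<Longrightarrow> E S \<Longrightarrow> \<exists>m\<in>M. F m S"
  shows "bernoulli_set_prob V p E \<le> (\<Sum>m\<in>M. bernoulli_set_prob V p (F m))"
proof -
  have "(if E S then bernoulli_set_weight V p S else 0)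
      \<le> (\<Sum>m\<in>M. if F m S then bernoulli_set_weight V p S else 0)" if S: "S \<subseteq> V" for S
  proof (cases "E S")
    case True
    obtain m where "m \<in> M" "F m S" using assms(3)[OF S True] by blast
    then have "bernoulli_set_weight V p S = (if F m S then bernoulli_set_weight V p S else 0)"
      by simp
    also have "\<dots> \<le> (\<Sum>m\<in>M. if F m S then bernoulli_set_weight V p S else 0)"
      using \<open>m \<in> M\<close> assms(1) bernoulli_set_weight_nonneg[OF assms(2) S]
      by (intro member_le_sum) auto
    finally show ?thesis using True by simp
  next
    case False
    then show ?thesis
      using bernoulli_set_weight_nonneg[OF assms(2) S] by (simp add: sum_nonneg)
  qed
  then have "bernoulli_set_prob V p E
      \<le> (\<Sum>S\<in>Pow V. \<Sum>m\<in>M. if F m S then bernoulli_set_weight V p S else 0)"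
    unfolding bernoulli_set_prob_def by (intro sum_mono) auto
  also have "\<dots> = (\<Sum>m\<in>M. bernoulli_set_prob V p (F m))"
    unfolding bernoulli_set_prob_def by (rule sum.swap)
  finally show ?thesis .
qed

text \<open>A factorial moment bound: a sample with at least \<open>a\<close> lower summands of \<open>m\<close> contains at least
  \<open>(a - k + 1)^k / k!\<close> sets \<open>T \<union> (m - T)\<close> with \<open>card T = k\<close>, and each of them is contained in
  the sample with probability \<open>\<Prod>s\<in>T. p s * p (m - s)\<close>.\<close>
lemma prob_many_lower_summands_le:
  fixes V :: "int set" and p :: "int \<Rightarrow> real"
  assumes V: "finite V" and p: "\<forall>x\<in>V. 0 \<le> p x \<and> p x \<le> 1" and "k \<le> a"
  shows "real ((a - k + 1) ^ k) * bernoulli_set_prob V p (\<lambda>S. a \<le> card (lower_summands S m))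
    \<le> (\<Sum>s\<in>lower_summands V m. p s * p (m - s)) ^ k"
proof -
  define K where "K = {T. T \<subseteq> lower_summands V m \<and> card T = k}"
  define pairs where "pairs T = T \<union> (\<lambda>s. m - s) ` T" for T
  have "finite (lower_summands V m)" using V by (simp add: lower_summands_def)
  then have "finite K" by (simp add: K_def)
  have "real ((a - k + 1) ^ k) * (if a \<le> card (lower_summands S m) then bernoulli_set_weight V p S else 0)
      \<le> fact k * (\<Sum>T\<in>K. if pairs T \<subseteq> S then bernoulli_set_weight V p S else 0)"
    if S: "S \<subseteq> V" for S
  proof (cases "a \<le> card (lower_summands S m)")
    case True
    have "{T \<in> K. pairs T \<subseteq> S}
        = {T. T \<subseteq> lower_summands V m \<and> card T = k \<and> T \<union> (\<lambda>s. m - s) ` T \<subseteq> S}"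
      by (auto simp: K_def pairs_def)
    then have "(a - k + 1) ^ k \<le> fact k * card {T \<in> K. pairs T \<subseteq> S}"
      using card_lower_summands_power_le[OF finite_subset[OF S V] S \<open>k \<le> a\<close> True] by simp
    then have "real ((a - k + 1) ^ k) \<le> fact k * card {T \<in> K. pairs T \<subseteq> S}"
      by (simp only: of_nat_le_iff)
    then have "real ((a - k + 1) ^ k) * bernoulli_set_weight V p S
        \<le> fact k * card {T \<in> K. pairs T \<subseteq> S} * bernoulli_set_weight V p S"
      using bernoulli_set_weight_nonneg[OF p S] by (rule mult_right_mono)
    also have "\<dots> = fact k * (\<Sum>T\<in>K. if pairs T \<subseteq> S then bernoulli_set_weight V p S else 0)"
      using \<open>finite K\<close> by (simp add: sum.inter_filter[symmetric])
    finally show ?thesis using True by simp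
  next
    case False
    then show ?thesis
      using bernoulli_set_weight_nonneg[OF p S] by (simp add: sum_nonneg)
  qed
  then have "real ((a - k + 1) ^ k) * bernoulli_set_prob V p (\<lambda>S. a \<le> card (lower_summands S m))
      \<le> fact k * (\<Sum>T\<in>K. bernoulli_set_prob V p (\<lambda>S. pairs T \<subseteq> S))"
    unfolding bernoulli_set_prob_def sum_distrib_left
    by (subst sum.swap) (intro sum_mono, auto)
  also have "\<dots> = fact k * (\<Sum>T\<in>K. \<Prod>s\<in>T. p s * p (m - s))"
  proof -
    have "bernoulli_set_prob V p (\<lambda>S. pairs T \<subseteq> S) = (\<Prod>s\<in>T. p s * p (m - s))" if "T \<in> K" for T
    proof -
      have T: "T \<subseteq> lower_summands V m" "finite T"
        using that \<open>finite (lower_summands V m)\<close> by (auto simp: K_def finite_subset)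
      then have "pairs T \<subseteq> V"
        by (auto simp: pairs_def lower_summands_def)
      then have "bernoulli_set_prob V p (\<lambda>S. pairs T \<subseteq> S) = (\<Prod>x\<in>pairs T. p x)"
        by (rule bernoulli_set_prob_supset[OF V])
      also have "\<dots> = (\<Prod>s\<in>T. p s * p (m - s))"
        unfolding pairs_def using T by (rule prod_lower_summands_pairs)
      finally show ?thesis .
    qed
    then show ?thesis by simp
  qed
  also have "\<dots> \<le> (\<Sum>s\<in>lower_summands V m. p s * p (m - s)) ^ k"
    unfolding K_def using p \<open>finite (lower_summands V m)\<close>
    by (intro fact_mult_sum_prod_k_subsets_le) (auto simp: lower_summands_def)
  finally show ?thesis .
qed

lemma prob_many_lower_summands_exp_le:
  fixes V :: "int set" and p :: "int \<Rightarrow> real" and a :: nat and \<epsilon> :: real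
  assumes V: "finite V" and p: "\<forall>x\<in>V. 0 \<le> p x \<and> p x \<le> 1" and \<epsilon>: "0 < \<epsilon>" "\<epsilon> \<le> 1/2"
    and mean: "(\<Sum>s\<in>lower_summands V m. p s * p (m - s)) \<le> (1 - \<epsilon>)^2 * real a"
  shows "bernoulli_set_prob V p (\<lambda>S. a \<le> card (lower_summands S m)) \<le> 2 * exp (- (\<epsilon>^2 * real a))"
proof -
  define P where "P = bernoulli_set_prob V p (\<lambda>S. a \<le> card (lower_summands S m))"
  define \<mu> where "\<mu> = (\<Sum>s\<in>lower_summands V m. p s * p (m - s))"
  define k where "k = nat \<lfloor>\<epsilon> * real a\<rfloor>"
  have "0 \<le> \<epsilon> * real a" using \<epsilon> by simp
  then have "real k = of_int \<lfloor>\<epsilon> * real a\<rfloor>" by (simp add: k_def)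
  then have k: "real k \<le> \<epsilon> * real a" "\<epsilon> * real a - 1 \<le> real k"
    using of_int_floor_le[of "\<epsilon> * real a"] real_of_int_floor_add_one_gt[of "\<epsilon> * real a"] by linarith+
  moreover have "\<epsilon> * real a \<le> a" using \<epsilon> by (simp add: mult_left_le_one_le)
  ultimately have "k \<le> a" by linarith
  have "0 \<le> \<mu>" unfolding \<mu>_def using p by (intro sum_nonneg) (auto simp: lower_summands_def)
  have "\<mu> \<le> (1 - \<epsilon>) * ((1 - \<epsilon>) * real a)"
    using mean by (simp add: \<mu>_def power2_eq_square)
  also have "\<dots> \<le> (1 - \<epsilon>) * real (a - k + 1)"
    using k \<epsilon> \<open>k \<le> a\<close> by (intro mult_left_mono) (auto simp: of_nat_diff algebra_simps)
  finally have "real ((a - k + 1) ^ k) * P \<le> ((1 - \<epsilon>) * real (a - k + 1)) ^ k"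
    using prob_many_lower_summands_le[OF V p \<open>k \<le> a\<close>, of m] \<open>0 \<le> \<mu>\<close>
    unfolding P_def \<mu>_def by (meson order_trans power_mono)
  then have "P \<le> (1 - \<epsilon>) ^ k"
    by (simp add: power_mult_distrib mult.commute[of _ "(1 - \<epsilon>) ^ k"])
  also have "\<dots> \<le> exp (- \<epsilon>) ^ k"
    using \<epsilon> exp_ge_add_one_self[of "- \<epsilon>"] by (intro power_mono) auto
  also have "\<dots> = exp (- (\<epsilon>^2 * real a)) * exp (\<epsilon> * (\<epsilon> * real a - real k))"
    unfolding exp_of_nat_mult[symmetric] exp_add[symmetric] by (simp add: algebra_simps power2_eq_square)
  also have "\<dots> \<le> exp (- (\<epsilon>^2 * real a)) * exp (1/2)"
  proof -
    have "\<epsilon> * (\<epsilon> * real a - real k) \<le> \<epsilon> * 1"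
      using k \<epsilon> by (intro mult_left_mono) auto
    then have "\<epsilon> * (\<epsilon> * real a - real k) \<le> 1/2" using \<epsilon> by linarith
    then show ?thesis by simp
  qed
  also have "\<dots> \<le> 2 * exp (- (\<epsilon>^2 * real a))"
    using exp_half_le2 by simp
  finally show ?thesis unfolding P_def .
qed

section \<open>The random construction\<close>

lemma card_le_R:
  assumes "S \<subseteq> {1..int n}" "Bstar g S"
  shows "card S \<le> R g n"
proof -
  have "finite {card S |S. S \<subseteq> {1..int n} \<and> Bstar g S}"
    by (rule finite_subset[of _ "card ` Pow {1..int n}"]) auto
  then show ?thesis unfolding R_def using assms by (intro Max_ge) auto
qed

text \<open>The deletion method: a sample that is a \<open>B*[g]\<close> set has at most \<open>R g n\<close> elements, any
  other sample at most \<open>n\<close>.\<close>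
lemma expected_card_le_R:
  assumes p: "\<forall>x\<in>{1..int n}. 0 \<le> p x \<and> p x \<le> 1"
  shows "(\<Sum>x\<in>{1..int n}. p x) \<le> R g n + n * bernoulli_set_prob {1..int n} p (\<lambda>S. \<not> Bstar g S)"
proof -
  let ?V = "{1..int n}"
  let ?w = "bernoulli_set_weight ?V p"
  have "?w S * card S \<le> ?w S * R g n + n * (if \<not> Bstar g S then ?w S else 0)" if S: "S \<subseteq> ?V" for S
  proof (cases "Bstar g S")
    case True
    then show ?thesis
      using card_le_R[OF S True] bernoulli_set_weight_nonneg[OF p S] by (simp add: mult_left_mono)
  next
    case False
    have "card S \<le> n" using card_mono[OF _ S] by simp
    then have "?w S * card S \<le> n * ?w S"
      using bernoulli_set_weight_nonneg[OF p S] by (subst mult.commute) (intro mult_right_mono, auto)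
    moreover have "0 \<le> ?w S * R g n" using bernoulli_set_weight_nonneg[OF p S] by simp
    ultimately show ?thesis using False by simp
  qed
  then have "(\<Sum>S\<in>Pow ?V. ?w S * card S)
      \<le> (\<Sum>S\<in>Pow ?V. ?w S * R g n + n * (if \<not> Bstar g S then ?w S else 0))"
    by (intro sum_mono) auto
  also have "\<dots> = R g n + n * bernoulli_set_prob ?V p (\<lambda>S. \<not> Bstar g S)"
    by (simp add: bernoulli_set_prob_def sum.distrib bernoulli_set_weight_sum
        flip: sum_distrib_left sum_distrib_right)
  finally show ?thesis by (simp add: bernoulli_set_expected_card)
qed

lemma prob_not_Bstar_le:
  assumes "\<forall>x\<in>{1..int n}. 0 \<le> p x \<and> p x \<le> 1"
  shows "bernoulli_set_prob {1..int n} p (\<lambda>S. \<not> Bstar g S)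
    \<le> (\<Sum>m\<in>{2..2 * int n}. bernoulli_set_prob {1..int n} p (\<lambda>S. (g + 1) div 2 \<le> card (lower_summands S m)))"
proof (rule bernoulli_set_prob_union_bound[OF _ assms])
  fix S assume S: "S \<subseteq> {1..int n}" "\<not> Bstar g S"
  then obtain m where m: "g < rep_count S m" by (auto simp: Bstar_def not_le)
  then have "{(s1, s2). s1 \<in> S \<and> s2 \<in> S \<and> s1 + s2 = m} \<noteq> {}"
    unfolding rep_count_def by (metis card.empty not_less0)
  then obtain s1 s2 where "s1 \<in> {1..int n}" "s2 \<in> {1..int n}" "s1 + s2 = m"
    using S(1) by blast
  then have "m \<in> {2..2 * int n}" by auto
  have "g < 2 * card (lower_summands S m) + 1"
    using m rep_count_le_lower_summands[OF finite_subset[OF S(1)], of m] by simp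
  then have "(g + 1) div 2 \<le> card (lower_summands S m)" by linarith
  with \<open>m \<in> {2..2 * int n}\<close> show "\<exists>m\<in>{2..2 * int n}. (g + 1) div 2 \<le> card (lower_summands S m)"
    by blast
qed simp

lemma lower_summands_weight_le:
  fixes \<beta> c :: real
  assumes "0 \<le> \<beta>" "0 \<le> c"
  shows "(\<Sum>s\<in>lower_summands {1..int n} m. \<beta> / sqrt (s + c) * (\<beta> / sqrt ((m - s) + c)))
    \<le> \<beta>^2 * (pi / 2)"
proof (cases "lower_summands {1..int n} m = {}")
  case False
  define f where "f x = 1 / sqrt (x * (real_of_int m - x))" for x :: real
  define j where "j = nat ((m - 1) div 2)"
  have "2 \<le> m" using False by (auto simp: lower_summands_def)
  then have j: "2 * real j + 1 \<le> m" by (simp add: j_def)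
  have sub: "lower_summands {1..int n} m \<subseteq> int ` {1..j}"
  proof
    fix s assume "s \<in> lower_summands {1..int n} m"
    then have "s = int (nat s)" "nat s \<in> {1..j}" by (auto simp: lower_summands_def j_def)
    then show "s \<in> int ` {1..j}" by blast
  qed
  have "\<beta> / sqrt (s + c) * (\<beta> / sqrt ((m - s) + c)) \<le> \<beta>^2 * f s"
    if "s \<in> lower_summands {1..int n} m" for s
  proof -
    have s: "1 \<le> real_of_int s" "1 \<le> real_of_int (m - s)"
      using that by (auto simp: lower_summands_def)
    then have "real_of_int s * real_of_int (m - s) \<le> (s + c) * ((m - s) + c)"
      using assms by (intro mult_mono) auto
    moreover have "0 < real_of_int s * real_of_int (m - s)" using s by simp
    ultimately show ?thesis
      by (simp add: f_def power2_eq_square real_sqrt_mult[symmetric] divide_left_mono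
          real_sqrt_le_mono mult_pos_pos)
  qed
  then have "(\<Sum>s\<in>lower_summands {1..int n} m. \<beta> / sqrt (s + c) * (\<beta> / sqrt ((m - s) + c)))
      \<le> \<beta>^2 * (\<Sum>s\<in>lower_summands {1..int n} m. f s)"
    by (simp add: sum_distrib_left sum_mono)
  also have "(\<Sum>s\<in>lower_summands {1..int n} m. f s) \<le> (\<Sum>s\<in>int ` {1..j}. f s)"
    using sub j by (intro sum_mono2) (auto simp: f_def)
  also have "\<dots> = (\<Sum>s = 1..j. f (real s))"
    by (simp add: sum.reindex)
  also have "\<dots> \<le> pi / 2"
    unfolding f_def by (rule sum_inverse_sqrt_le_pi_half[OF j])
  finally show ?thesis using assms by (simp add: mult_left_mono)
qed simp

text \<open>The sample takes \<open>x\<close> with probability \<open>\<beta> / sqrt (x + g)\<close>: the shift by \<open>g\<close> keeps these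
  probabilities below \<open>1\<close>, and the expected number of lower summands of any \<open>m\<close> is still at most
  \<open>\<beta>^2 pi / 2 = (1 - \<epsilon>)^2 g / 2\<close>.\<close>
lemma R_ge_random_construction:
  fixes g n :: nat and \<epsilon> :: real
  assumes "0 < g" "0 < \<epsilon>" "\<epsilon> \<le> 1/2"
  defines "\<beta> \<equiv> (1 - \<epsilon>) * sqrt (g / pi)"
  shows "2 * \<beta> * (sqrt (real n) - sqrt (real g + 1)) - 4 * real n ^ 2 * exp (- (\<epsilon>^2 * real g / 2)) \<le> real (R g n)"
proof -
  define V where "V = {1..int n}"
  define p where "p x = \<beta> / sqrt (real_of_int x + real g)" for x :: int
  define a where "a = (g + 1) div 2"
  have "g \<le> 2 * a" unfolding a_def by presburger
  then have g_le: "real g / 2 \<le> real a" by linarith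
  have "0 \<le> \<beta>" using assms by (simp add: \<beta>_def)
  have "\<beta> \<le> sqrt (g / pi)"
    unfolding \<beta>_def using assms by (intro mult_left_le_one_le) auto
  also have "\<dots> \<le> sqrt g"
    using pi_ge_two by (simp add: divide_le_eq mult_le_cancel_left1)
  finally have "\<beta> \<le> sqrt g" .
  have p: "\<forall>x\<in>V. 0 \<le> p x \<and> p x \<le> 1"
    using \<open>0 \<le> \<beta>\<close> \<open>\<beta> \<le> sqrt g\<close> by (auto simp: V_def p_def intro: order_trans)
  have "bernoulli_set_prob V p (\<lambda>S. a \<le> card (lower_summands S m)) \<le> 2 * exp (- (\<epsilon>^2 * real g / 2))"
    for m
  proof -
    have "(\<Sum>s\<in>lower_summands V m. p s * p (m - s)) \<le> \<beta>^2 * (pi / 2)"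
      unfolding V_def p_def using \<open>0 \<le> \<beta>\<close> by (intro lower_summands_weight_le) auto
    also have "\<dots> = (1 - \<epsilon>)^2 * g / 2"
      by (simp add: \<beta>_def power_mult_distrib)
    also have "\<dots> \<le> (1 - \<epsilon>)^2 * a"
      using mult_left_mono[OF g_le, of "(1 - \<epsilon>)^2"] by simp
    finally have "bernoulli_set_prob V p (\<lambda>S. a \<le> card (lower_summands S m)) \<le> 2 * exp (- (\<epsilon>^2 * a))"
      using assms by (intro prob_many_lower_summands_exp_le[OF _ p]) (auto simp: V_def)
    also have "\<dots> \<le> 2 * exp (- (\<epsilon>^2 * real g / 2))"
      using mult_left_mono[OF g_le, of "\<epsilon>^2"] by simp
    finally show ?thesis .
  qed
  then have "bernoulli_set_prob V p (\<lambda>S. \<not> Bstar g S) \<le> card {2..2 * int n} * (2 * exp (- (\<epsilon>^2 * real g / 2)))"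
    using prob_not_Bstar_le[OF p[unfolded V_def]] unfolding V_def a_def
    by (meson order_trans sum_bounded_above)
  also have "\<dots> \<le> 2 * n * (2 * exp (- (\<epsilon>^2 * real g / 2)))"
    by (intro mult_right_mono) auto
  finally have "n * bernoulli_set_prob V p (\<lambda>S. \<not> Bstar g S) \<le> n * (2 * n * (2 * exp (- (\<epsilon>^2 * real g / 2))))"
    by (intro mult_left_mono) auto
  then have "n * bernoulli_set_prob V p (\<lambda>S. \<not> Bstar g S) \<le> 4 * real n ^ 2 * exp (- (\<epsilon>^2 * real g / 2))"
    by (simp add: power2_eq_square algebra_simps)
  moreover have "\<beta> * (2 * (sqrt (real n) - sqrt (real g + 1)))
      \<le> \<beta> * (2 * (sqrt (real n + real g + 1) - sqrt (real g + 1)))"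
    using \<open>0 \<le> \<beta>\<close> by (intro mult_left_mono) auto
  moreover have "\<dots> \<le> \<beta> * (\<Sum>x\<in>V. 1 / sqrt (real_of_int x + real g))"
    unfolding V_def using sum_inverse_sqrt_ge[of "real g" n] \<open>0 \<le> \<beta>\<close> by (intro mult_left_mono) auto
  moreover have "\<dots> = (\<Sum>x\<in>V. p x)"
    by (simp add: p_def sum_distrib_left)
  ultimately show ?thesis
    using expected_card_le_R[OF p[unfolded V_def], of g] unfolding V_def by linarith
qed

lemma square_mult_exp_le:
  fixes n :: nat and e :: real
  assumes "0 < n" "6 * ln n \<le> e"
  shows "real n ^ 2 * exp (- (e / 2)) \<le> 1 / n"
proof -
  have "exp (- (e / 2)) \<le> exp (- (3 * ln n))"
    using assms(2) by simp
  also have "\<dots> = inverse (exp (ln n) ^ 3)"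
    by (simp add: exp_minus exp_of_nat_mult[of 3, simplified])
  also have "\<dots> = 1 / real n ^ 3"
    using assms(1) by (simp add: inverse_eq_divide)
  finally have "real n ^ 2 * exp (- (e / 2)) \<le> real n ^ 2 * (1 / real n ^ 3)"
    by (rule mult_left_mono) simp
  also have "\<dots> = 1 / n"
    using assms(1) by (simp add: power2_eq_square power3_eq_cube)
  finally show ?thesis .
qed

lemma sqrt_add_one_term_le:
  fixes g n :: nat and \<delta> \<epsilon> :: real
  assumes "0 < g" "0 < \<delta>" "0 \<le> \<epsilon>" "\<epsilon> \<le> 1" "144 * real g \<le> \<delta>^2 * n"
  shows "2 * ((1 - \<epsilon>) * sqrt (g / pi)) * sqrt (real g + 1) \<le> \<delta> / 4 * sqrt (real g * real n)"
proof (rule power2_le_imp_le)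
  have "(2 * ((1 - \<epsilon>) * sqrt (g / pi)) * sqrt (real g + 1))^2
      = 4 * (1 - \<epsilon>)^2 * (real g / pi) * (real g + 1)"
    by (simp add: power_mult_distrib)
  also have "\<dots> \<le> 4 * 1 * (real g / 2) * (real g + 1)"
    using assms pi_ge_two
    by (intro mult_right_mono mult_mono mult_left_mono divide_left_mono) (auto simp: power_le_one)
  also have "\<dots> \<le> 9 * real g ^ 2"
    using assms(1) by (simp add: power2_eq_square)
  also have "\<dots> \<le> \<delta>^2 * n * g / 16"
    using mult_right_mono[OF assms(5), of "real g"] by (simp add: power2_eq_square)
  also have "\<dots> = (\<delta> / 4 * sqrt (real g * real n))^2"
    by (simp add: power_mult_distrib power_divide)
  finally show "(2 * ((1 - \<epsilon>) * sqrt (g / pi)) * sqrt (real g + 1))^2 \<le> (\<delta> / 4 * sqrt (real g * real n))^2" .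
qed (use assms in simp)

lemma R_gt_of_growth_conditions:
  fixes g n :: nat and \<delta> \<epsilon> :: real
  assumes "0 < g" "0 < n" "0 < \<delta>" "0 < \<epsilon>" "\<epsilon> \<le> 1/2" "\<epsilon> \<le> \<delta> / 4"
    and "6 * ln n \<le> \<epsilon>^2 * g" "144 * real g \<le> \<delta>^2 * n" "24 < \<delta> * n"
  shows "(2 / sqrt pi - \<delta>) * sqrt (real g * real n) < R g n"
proof -
  define G where "G = sqrt (real g * real n)"
  have "1 \<le> g * n" using assms(1,2) by (simp add: Suc_le_eq)
  then have "1 \<le> G" unfolding G_def by (metis of_nat_1 of_nat_le_iff of_nat_mult real_sqrt_ge_one)
  have "2 / sqrt pi \<le> 2" using pi_ge_two by (simp add: divide_le_eq)
  then have "2 / sqrt pi * \<epsilon> \<le> 2 * \<epsilon>" using assms(4) by (intro mult_right_mono) auto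
  then have "2 / sqrt pi * \<epsilon> \<le> \<delta> / 2" using assms(6) by linarith
  moreover have "2 / sqrt pi * (1 - \<epsilon>) = 2 / sqrt pi - 2 / sqrt pi * \<epsilon>"
    by (simp add: right_diff_distrib)
  ultimately have "(2 / sqrt pi - \<delta> / 2) * G \<le> 2 / sqrt pi * (1 - \<epsilon>) * G"
    using \<open>1 \<le> G\<close> by (intro mult_right_mono) auto
  also have "\<dots> = 2 * ((1 - \<epsilon>) * sqrt (g / pi)) * sqrt n"
    by (simp add: G_def real_sqrt_mult real_sqrt_divide)
  finally have main: "(2 / sqrt pi - \<delta> / 2) * G \<le> 2 * ((1 - \<epsilon>) * sqrt (g / pi)) * sqrt n" .
  have "2 * ((1 - \<epsilon>) * sqrt (g / pi)) * sqrt (real g + 1) \<le> \<delta> / 4 * G"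
    unfolding G_def using assms by (intro sqrt_add_one_term_le) auto
  moreover have "4 * real n ^ 2 * exp (- (\<epsilon>^2 * real g / 2)) \<le> 4 / n"
    using square_mult_exp_le[OF assms(2,7)] by simp
  moreover have "4 / n < \<delta> / 4 * G"
  proof -
    have "4 / n < \<delta> / 4" using assms(2,9) by (simp add: field_simps)
    also have "\<dots> \<le> \<delta> / 4 * G" using \<open>1 \<le> G\<close> assms(3) by simp
    finally show ?thesis .
  qed
  ultimately show ?thesis
    using main R_ge_random_construction[OF assms(1,4,5), of n]
    unfolding G_def left_diff_distrib right_diff_distrib by linarith
qed

lemma mult_less_of_le_less_divide:
  fixes x y c L :: real
  assumes "0 < c" "0 \<le> x" "c \<le> L" "L < x / y"
  shows "c * y < x"
proof -
  have "0 < y"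
  proof (rule ccontr)
    assume "\<not> 0 < y"
    then have "x / y \<le> 0" using assms(2) by (simp add: divide_nonneg_nonpos)
    with assms(1,3,4) show False by linarith
  qed
  then have "c * y \<le> L * y" "L * y < x"
    using assms(3,4) by (simp_all add: mult_right_mono pos_less_divide_eq)
  then show ?thesis by linarith
qed

theorem theorem3p9:
  fixes \<delta> :: real
  assumes "\<delta> > 0"
  shows "\<exists>L::real. \<forall>g n::nat. g > 0 \<and> n > 0 \<and> real g / ln (real n) > L \<and> real n / real g > L
           \<longrightarrow> real (R g n) > (2 / sqrt pi - \<delta>) * sqrt (real g * real n)"
proof -
  define \<epsilon> where "\<epsilon> = min (1/2) (\<delta> / 4)"
  have \<epsilon>: "0 < \<epsilon>" "\<epsilon> \<le> 1/2" "\<epsilon> \<le> \<delta> / 4" using assms by (auto simp: \<epsilon>_def)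
  define L where "L = max (max (144 / \<delta>^2) (6 / \<epsilon>^2)) (24 / \<delta>)"
  have L: "144 / \<delta>^2 \<le> L" "6 / \<epsilon>^2 \<le> L" "24 / \<delta> \<le> L" by (auto simp: L_def)
  show ?thesis
  proof (intro exI[of _ L] allI impI, elim conjE)
    fix g n :: nat
    assume g: "0 < g" and n: "0 < n" and gL: "L < real g / ln n" and nL: "L < real n / real g"
    have "6 / \<epsilon>^2 * ln n < g"
      using \<epsilon>(1) by (intro mult_less_of_le_less_divide[OF _ _ L(2) gL]) auto
    moreover have "144 / \<delta>^2 * g < n"
      using assms by (intro mult_less_of_le_less_divide[OF _ _ L(1) nL]) auto
    moreover have "24 / \<delta> * g < n"
      using assms by (intro mult_less_of_le_less_divide[OF _ _ L(3) nL]) auto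
    moreover have "24 / \<delta> \<le> 24 / \<delta> * g"
      using mult_left_mono[of 1 "real g" "24 / \<delta>"] assms g by simp
    ultimately have "6 * ln n \<le> \<epsilon>^2 * g" "144 * real g \<le> \<delta>^2 * n" "24 < \<delta> * n"
      using assms \<epsilon>(1) by (simp_all add: field_simps)
    then show "(2 / sqrt pi - \<delta>) * sqrt (real g * real n) < R g n"
      using R_gt_of_growth_conditions[OF g n assms \<epsilon>] by simp
  qed
qed

end
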